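(* Let $I=[a,b]$ be a compact interval, $r\ge1$ an integer, $g\in C^r(I,\mathbb R)$, and put $C_r:=\|g^{(r)}\|_{L^\infty(I)}$. Then for every $0<\lambda\le\|g\|_\infty$ there is a finite family of pairwise disjoint intervals $I_{\lambda,i}$, $i\in\mathcal I_\lambda$, such that: (i) $|\mathcal I_\lambda|\le 30r\big(1+|I|\,C_r^{1/r}\lambda^{-1/r}\big)$; (ii) with $V_\lambda:=\bigcup_{i\in\mathcal I_\lambda}I_{\lambda,i}$, we have $\{t\in I:|g(t)|<\lambda\}\subset V_\lambda\subset\{t\in I:|g(t)|<8\lambda\}$.
   Context: $\|g\|_\infty$ denotes the supremum of $|g|$ over $I$, and $|I|=b-a$ is the length of $I$. *)

theory Defs
  imports "HOL-Analysis.Analysis"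
begin

definition deriv_chain_on :: "nat \<Rightarrow> real set \<Rightarrow> (real \<Rightarrow> real) \<Rightarrow> (nat \<Rightarrow> real \<Rightarrow> real) \<Rightarrow> bool" where
  "deriv_chain_on r S g D \<longleftrightarrow>
     (\<forall>t\<in>S. D 0 t = g t) \<and>
     (\<forall>k<r. \<forall>t\<in>S. (D k has_real_derivative D (Suc k) t) (at t within S)) \<and>
     continuous_on S (D r)"

end

theory Submission
  imports Defs "HOL-Computational_Algebra.Polynomial"
begin

(* Cut [a,b] into N \<le> 1 + |I| (C/lam)^(1/r) pieces of length h with C h^r \<le> lam.  On each piece
   Taylor's theorem makes g lam-close to a polynomial P of degree < r.  The intervals are the
   connected components of {|g| < 8 lam} within a piece that meet {|g| < lam}.  Between two such
   components g reaches 8 lam, so P^2 - 9 lam^2 is negative on each component and positive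
   between consecutive ones; having degree \<le> 2r - 2, it allows at most r components per piece. *)

definition taylor_poly :: "(nat \<Rightarrow> real \<Rightarrow> real) \<Rightarrow> real \<Rightarrow> nat \<Rightarrow> real poly" where
  "taylor_poly D x n = (\<Sum>j<n. smult (D j x / fact j) ([:-x, 1:] ^ j))"

lemma poly_taylor_poly: "poly (taylor_poly D x n) y = (\<Sum>j<n. D j x * (y - x) ^ j / fact j)"
  by (simp add: taylor_poly_def poly_sum poly_power)

lemma degree_taylor_poly: "degree (taylor_poly D x n) \<le> n - 1"
  unfolding taylor_poly_def
proof (rule degree_sum_le)
  fix j assume "j \<in> {..<n}"
  have "degree (smult (D j x / fact j) ([:-x, 1:] ^ j)) \<le> degree ([:-x, 1:] ^ j)"
    by (rule degree_smult_le)
  also have "\<dots> = j" by (rule degree_linear_power)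
  finally show "degree (smult (D j x / fact j) ([:-x, 1:] ^ j)) \<le> n - 1"
    using \<open>j \<in> {..<n}\<close> by simp
qed simp

lemma deriv_chain_taylor_remainder:
  fixes a b C :: real
  assumes chain: "deriv_chain_on r {a..b} g D"
    and bound: "\<And>t. t \<in> {a..b} \<Longrightarrow> \<bar>D r t\<bar> \<le> C"
    and "k \<le> r" "x \<in> {a..b}" "y \<in> {a..b}"
  shows "\<bar>D (r - k) y - (\<Sum>j<k. D (r - k + j) x * (y - x) ^ j / fact j)\<bar> \<le> C * \<bar>y - x\<bar> ^ k"
  using assms(3-5)
proof (induction k arbitrary: y)
  case 0
  then show ?case using bound by simp
next
  case (Suc k)
  define m where "m = r - Suc k"
  have m: "r - k = Suc m" "m < r" using Suc.prems by (simp_all add: m_def)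
  define \<phi> where "\<phi> t = D m t - (\<Sum>j<Suc k. D (m + j) x * (t - x) ^ j / fact j)" for t
  define \<psi> where "\<psi> t = D (Suc m) t - (\<Sum>j<k. D (Suc m + j) x * (t - x) ^ j / fact j)" for t
  let ?S = "closed_segment x y"
  have S: "?S \<subseteq> {a..b}"
    using Suc.prems by (simp add: closed_segment_subset is_interval_cc is_interval_convex)
  have "(\<phi> has_field_derivative \<psi> t) (at t within ?S)" if "t \<in> ?S" for t
  proof -
    have "(D m has_field_derivative D (Suc m) t) (at t within {a..b})"
      using chain m(2) S that unfolding deriv_chain_on_def by auto
    moreover have "((\<lambda>t. \<Sum>j<Suc k. D (m + j) x * (t - x) ^ j / fact j) has_field_derivative
        (\<Sum>j<Suc k. D (m + j) x * (of_nat j * (t - x) ^ (j - 1)) / fact j)) (at t within {a..b})"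
      by (intro derivative_eq_intros) auto
    moreover have "(\<Sum>j<Suc k. D (m + j) x * (of_nat j * (t - x) ^ (j - 1)) / fact j) =
        (\<Sum>j<k. D (Suc m + j) x * (t - x) ^ j / fact j)"
      by (subst sum.lessThan_Suc_shift) (simp add: fact_Suc divide_simps)
    ultimately have "(\<phi> has_field_derivative \<psi> t) (at t within {a..b})"
      unfolding \<phi>_def [abs_def] \<psi>_def using DERIV_diff by fastforce
    then show ?thesis using has_field_derivative_subset S by blast
  qed
  moreover have "norm (\<psi> t) \<le> C * \<bar>y - x\<bar> ^ k" if "t \<in> ?S" for t
  proof -
    have "\<bar>\<psi> t\<bar> \<le> C * \<bar>t - x\<bar> ^ k"
      using Suc.IH [of t] Suc.prems S that m(1) unfolding \<psi>_def by auto
    also have "\<dots> \<le> C * \<bar>y - x\<bar> ^ k"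
      using that bound [of x] Suc.prems
      by (intro mult_left_mono power_mono) (auto simp: closed_segment_eq_real_ivl split: if_splits)
    finally show ?thesis by simp
  qed
  ultimately have "norm (\<phi> y - \<phi> x) \<le> C * \<bar>y - x\<bar> ^ k * norm (y - x)"
    by (intro field_differentiable_bound [OF convex_closed_segment]) auto
  moreover have "\<phi> x = 0" unfolding \<phi>_def by (subst sum.lessThan_Suc_shift) simp
  ultimately show ?case unfolding \<phi>_def m_def by (simp add: mult_ac)
qed

lemma deriv_chain_taylor_poly_approx:
  fixes a b C :: real
  assumes "deriv_chain_on r {a..b} g D"
    and "\<And>t. t \<in> {a..b} \<Longrightarrow> \<bar>D r t\<bar> \<le> C" "x \<in> {a..b}" "y \<in> {a..b}"
  shows "\<bar>g y - poly (taylor_poly D x r) y\<bar> \<le> C * \<bar>y - x\<bar> ^ r"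
  using deriv_chain_taylor_remainder [OF assms(1,2) order.refl assms(3,4)] assms(1,4)
  by (simp add: poly_taylor_poly deriv_chain_on_def)

(* Each sign change of Q costs a root, and Q changes sign twice between consecutive points of A. *)
lemma card_roots_below_Max:
  fixes Q :: "real poly"
  assumes "Q \<noteq> 0" "finite A" "A \<noteq> {}" "\<forall>s\<in>A. poly Q s < 0"
    and "\<forall>x\<in>A. \<forall>y\<in>A. x < y \<longrightarrow> (\<exists>u. x < u \<and> u < y \<and> poly Q u > 0)"
  shows "2 * card A \<le> card {z. poly Q z = 0 \<and> z < Max A} + 2"
  using assms(2-)
proof (induction "card A" arbitrary: A)
  case 0
  then show ?case by simp
next
  case (Suc n)
  show ?case
  proof (cases "n = 0")
    case True
    then show ?thesis using Suc.hyps(2) by simp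
  next
    case False
    define m where "m = Max A"
    define A' where "A' = A - {m}"
    have m: "m \<in> A" using Suc.prems by (simp add: m_def)
    have A': "finite A'" "card A' = n"
      using Suc.prems Suc.hyps(2) m by (simp_all add: A'_def)
    then have "A' \<noteq> {}" using False by auto
    define m' where "m' = Max A'"
    have "m' \<in> A'" using A' \<open>A' \<noteq> {}\<close> by (simp add: m'_def)
    then have m': "m' \<in> A'" "m' < m"
      using Suc.prems by (auto simp: A'_def m_def order.strict_iff_order)
    have IH: "2 * n \<le> card {z. poly Q z = 0 \<and> z < m'} + 2"
      using Suc.hyps(1) [of A'] A' \<open>A' \<noteq> {}\<close> Suc.prems by (auto simp: A'_def m'_def)
    obtain u where u: "m' < u" "u < m" "poly Q u > 0"
      using Suc.prems(4) m m' by (auto simp: A'_def)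
    have neg: "poly Q m' < 0" "poly Q m < 0" using Suc.prems(3) m m' by (auto simp: A'_def)
    obtain z1 where z1: "m' < z1" "z1 < u" "poly Q z1 = 0" using poly_IVT_pos [OF u(1) neg(1) u(3)] by auto
    obtain z2 where z2: "u < z2" "z2 < m" "poly Q z2 = 0" using poly_IVT_neg [OF u(2) u(3) neg(2)] by auto
    have fin: "finite {z. poly Q z = 0 \<and> z < t}" for t
      using poly_roots_finite [OF assms(1)] by (rule rev_finite_subset) auto
    have "card {z. poly Q z = 0 \<and> z < m'} + 2 = card (insert z1 (insert z2 {z. poly Q z = 0 \<and> z < m'}))"
      using z1 z2 u fin by simp
    also have "\<dots> \<le> card {z. poly Q z = 0 \<and> z < m}"
      using z1 z2 u m' by (intro card_mono fin) auto
    finally show ?thesis using IH Suc.hyps(2) by (simp add: m_def)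
  qed
qed

lemma card_sign_alternations_le_degree:
  fixes Q :: "real poly"
  assumes "Q \<noteq> 0" "finite A" "\<forall>s\<in>A. poly Q s < 0"
    and "\<forall>x\<in>A. \<forall>y\<in>A. x < y \<longrightarrow> (\<exists>u. x < u \<and> u < y \<and> poly Q u > 0)"
  shows "2 * card A \<le> degree Q + 2"
proof (cases "A = {}")
  case False
  have "card {z. poly Q z = 0 \<and> z < Max A} \<le> card {z. poly Q z = 0}"
    by (intro card_mono poly_roots_finite assms(1)) auto
  then show ?thesis
    using card_roots_below_Max [OF assms(1,2) False assms(3,4)] card_poly_roots_bound [OF assms(1)]
    by linarith
qed simp

lemma card_separated_small_points_le:
  fixes P :: "real poly" and lam :: real
  assumes approx: "\<And>t. t \<in> J \<Longrightarrow> \<bar>g t - poly P t\<bar> \<le> lam" and "degree P \<le> d" "lam > 0"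
    and "finite A" "A \<subseteq> J" and small: "\<And>s. s \<in> A \<Longrightarrow> \<bar>g s\<bar> < lam"
    and sep: "\<And>x y. x \<in> A \<Longrightarrow> y \<in> A \<Longrightarrow> x < y \<Longrightarrow> \<exists>u\<in>J. x < u \<and> u < y \<and> 8 * lam \<le> \<bar>g u\<bar>"
  shows "card A \<le> Suc d"
proof -
  define Q where "Q = P * P - [:9 * lam\<^sup>2:]"
  have poly_Q: "poly Q t = (poly P t)\<^sup>2 - (3 * lam)\<^sup>2" for t
    by (simp add: Q_def power2_eq_square)
  have neg: "\<forall>s\<in>A. poly Q s < 0"
  proof
    fix s assume "s \<in> A"
    then have "\<bar>poly P s\<bar> < 3 * lam" using approx [of s] small [of s] \<open>A \<subseteq> J\<close> by auto
    then have "\<bar>poly P s\<bar>\<^sup>2 < (3 * lam)\<^sup>2" by (intro power_strict_mono) auto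
    then show "poly Q s < 0" unfolding poly_Q by simp
  qed
  have pos: "\<forall>x\<in>A. \<forall>y\<in>A. x < y \<longrightarrow> (\<exists>u. x < u \<and> u < y \<and> poly Q u > 0)"
  proof (intro ballI impI)
    fix x y assume "x \<in> A" "y \<in> A" "x < y"
    then obtain u where u: "u \<in> J" "x < u" "u < y" "8 * lam \<le> \<bar>g u\<bar>" using sep by blast
    then have "3 * lam < \<bar>poly P u\<bar>" using approx [of u] \<open>lam > 0\<close> by auto
    then have "(3 * lam)\<^sup>2 < \<bar>poly P u\<bar>\<^sup>2" using \<open>lam > 0\<close> by (intro power_strict_mono) auto
    then have "poly Q u > 0" unfolding poly_Q by simp
    then show "\<exists>u. x < u \<and> u < y \<and> poly Q u > 0" using u by blast
  qed
  have "2 * card A \<le> degree Q + 2"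
  proof (cases "A = {}")
    case False
    then have "Q \<noteq> 0" using neg by force
    then show ?thesis using card_sign_alternations_le_degree \<open>finite A\<close> neg pos by blast
  qed simp
  moreover have "degree Q \<le> 2 * d"
    unfolding Q_def using degree_mult_le [of P P] \<open>degree P \<le> d\<close>
    by (intro order.trans [OF degree_diff_le_max]) auto
  ultimately show ?thesis by linarith
qed

definition small_components :: "real set \<Rightarrow> (real \<Rightarrow> real) \<Rightarrow> real \<Rightarrow> real set set" where
  "small_components J g lam =
     connected_component_set {t\<in>J. \<bar>g t\<bar> < 8 * lam} ` {s\<in>J. \<bar>g s\<bar> < lam}"

lemma small_components_subset:
  "K \<in> small_components J g lam \<Longrightarrow> K \<subseteq> {t\<in>J. \<bar>g t\<bar> < 8 * lam}"
  by (auto simp: small_components_def dest: connected_component_in)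

lemma is_interval_small_components: "K \<in> small_components J g lam \<Longrightarrow> is_interval K"
  by (auto simp: small_components_def is_interval_connected_1)

lemma disjoint_small_components: "disjoint (small_components J g lam)"
  by (auto simp: small_components_def disjoint_def connected_component_nonoverlap)

lemma small_components_cover:
  "lam > 0 \<Longrightarrow> {t\<in>J. \<bar>g t\<bar> < lam} \<subseteq> \<Union> (small_components J g lam)"
  by (force simp: small_components_def)

lemma card_small_components_le:
  fixes P :: "real poly" and lam :: real
  assumes J: "is_interval J"
    and approx: "\<And>t. t \<in> J \<Longrightarrow> \<bar>g t - poly P t\<bar> \<le> lam" and "degree P \<le> d" "lam > 0"
  shows "finite (small_components J g lam) \<and> card (small_components J g lam) \<le> Suc d"
proof -
  define U where "U = {t\<in>J. \<bar>g t\<bar> < 8 * lam}"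
  let ?S = "small_components J g lam"
  have "\<forall>K\<in>?S. \<exists>s. s \<in> J \<and> \<bar>g s\<bar> < lam \<and> K = connected_component_set U s"
    by (auto simp: small_components_def U_def)
  then obtain rep where rep: "\<And>K. K \<in> ?S \<Longrightarrow> rep K \<in> J \<and> \<bar>g (rep K)\<bar> < lam \<and> K = connected_component_set U (rep K)"
    by metis
  have "inj_on rep ?S" by (rule inj_onI) (metis rep)
  have "card A \<le> Suc d" if A: "A \<subseteq> rep ` ?S" "finite A" for A
  proof (rule card_separated_small_points_le [OF approx \<open>degree P \<le> d\<close> \<open>lam > 0\<close> A(2)])
    show "A \<subseteq> J" "\<And>s. s \<in> A \<Longrightarrow> \<bar>g s\<bar> < lam" using A rep by auto
    show "\<exists>u\<in>J. x < u \<and> u < y \<and> 8 * lam \<le> \<bar>g u\<bar>" if xy: "x \<in> A" "y \<in> A" "x < y" for x y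
    proof (rule ccontr)
      assume no_peak: "\<not> ?thesis"
      obtain Kx Ky where K: "Kx \<in> ?S" "Ky \<in> ?S" "x = rep Kx" "y = rep Ky" using xy A by blast
      have "x \<in> J" "y \<in> J" "\<bar>g x\<bar> < lam" "\<bar>g y\<bar> < lam" using rep K by auto
      then have "x \<in> U" "y \<in> U" using \<open>lam > 0\<close> by (simp_all add: U_def)
      moreover have "u \<in> U" if "x < u" "u < y" for u
      proof -
        have "u \<in> J" using J \<open>x \<in> J\<close> \<open>y \<in> J\<close> that by (meson is_interval_1 less_imp_le)
        then show ?thesis using no_peak that by (auto simp: U_def)
      qed
      ultimately have "{x..y} \<subseteq> U" by (force simp: order.order_iff_strict)
      then have "connected_component U x y"
        using xy by (intro connected_componentI [of "{x..y}"]) auto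
      then have "Kx = Ky" using rep K by (metis connected_component_eq mem_Collect_eq)
      then show False using K xy by simp
    qed
  qed
  then have "finite (rep ` ?S) \<and> card (rep ` ?S) \<le> Suc d"
    by (intro finite_if_finite_subsets_card_bdd)
  then show ?thesis using \<open>inj_on rep ?S\<close> finite_imageD card_image by metis
qed

lemma card_small_components_deriv_chain:
  fixes a b C h lam :: real
  assumes chain: "deriv_chain_on r {a..b} g D" and "r \<ge> 1"
    and bound: "\<And>t. t \<in> {a..b} \<Longrightarrow> \<bar>D r t\<bar> \<le> C" and "C * h ^ r \<le> lam" "lam > 0"
    and "is_interval J" "J \<subseteq> {a..b}" and diam: "\<And>x y. x \<in> J \<Longrightarrow> y \<in> J \<Longrightarrow> \<bar>y - x\<bar> \<le> h"
  shows "finite (small_components J g lam) \<and> card (small_components J g lam) \<le> r"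
proof (cases "J = {}")
  case True
  then show ?thesis by (simp add: small_components_def)
next
  case False
  then obtain x where "x \<in> J" by blast
  have approx: "\<bar>g y - poly (taylor_poly D x r) y\<bar> \<le> lam" if "y \<in> J" for y
  proof -
    have "\<bar>g y - poly (taylor_poly D x r) y\<bar> \<le> C * \<bar>y - x\<bar> ^ r"
      using deriv_chain_taylor_poly_approx [OF chain bound] \<open>x \<in> J\<close> that \<open>J \<subseteq> {a..b}\<close> by blast
    also have "\<dots> \<le> C * h ^ r"
      using diam [OF that \<open>x \<in> J\<close>] bound [of x] \<open>x \<in> J\<close> \<open>J \<subseteq> {a..b}\<close>
      by (intro mult_left_mono power_mono) auto
    finally show ?thesis using \<open>C * h ^ r \<le> lam\<close> by simp
  qed
  show ?thesis
    using card_small_components_le [OF \<open>is_interval J\<close> approx degree_taylor_poly \<open>lam > 0\<close>] \<open>r \<ge> 1\<close>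
    by simp
qed

lemma disjoint_UN_small_components:
  assumes "\<And>i j. i \<noteq> j \<Longrightarrow> P i \<inter> P j = {}"
  shows "disjoint (\<Union>i\<in>I. small_components (P i) g lam)"
proof (rule pairwiseI)
  fix K K' assume "K \<in> (\<Union>i\<in>I. small_components (P i) g lam)" "K' \<in> (\<Union>i\<in>I. small_components (P i) g lam)" "K \<noteq> K'"
  then obtain i j where K: "K \<in> small_components (P i) g lam" "K' \<in> small_components (P j) g lam"
    by blast
  show "disjnt K K'"
  proof (cases "i = j")
    case True
    then show ?thesis using K \<open>K \<noteq> K'\<close> disjoint_small_components by (metis pairwiseD)
  next
    case False
    then show ?thesis using K assms [OF False] small_components_subset by (fastforce simp: disjnt_def)
  qed
qed

lemma atLeastAtMost_mesh_partition:
  fixes a b h :: real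
  assumes "h > 0" "N \<ge> 1" "b - a \<le> real N * h"
  obtains P :: "nat \<Rightarrow> real set" where
    "(\<Union>i<N. P i) = {a..b}" "\<And>i j. i \<noteq> j \<Longrightarrow> P i \<inter> P j = {}" "\<And>i. is_interval (P i)"
    "\<And>i x y. x \<in> P i \<Longrightarrow> y \<in> P i \<Longrightarrow> \<bar>y - x\<bar> \<le> h"
proof -
  \<comment> \<open>the last piece also absorbs the overhang beyond a + (N - 1) h\<close>
  define idx where "idx t = min (N - 1) (nat \<lfloor>(t - a) / h\<rfloor>)" for t
  define P where "P i = {t\<in>{a..b}. idx t = i}" for i
  have idx_mono: "idx x \<le> idx y" if "x \<le> y" for x y
    unfolding idx_def using \<open>h > 0\<close> that
    by (intro min.mono order.refl nat_mono floor_mono divide_right_mono) auto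
  have bounds: "a + real i * h \<le> t \<and> t \<le> a + (real i + 1) * h" if "t \<in> P i" for t i
  proof -
    define f where "f = \<lfloor>(t - a) / h\<rfloor>"
    have "a \<le> t" "t \<le> b" "idx t = i" using that by (auto simp: P_def)
    then have "f \<ge> 0" using \<open>h > 0\<close> by (simp add: f_def)
    have f: "real_of_int f \<le> (t - a) / h" "(t - a) / h < real_of_int f + 1"
      unfolding f_def by linarith+
    show ?thesis
    proof (cases "nat f \<le> N - 1")
      case True
      then have "i = nat f" using \<open>idx t = i\<close> by (simp add: idx_def f_def)
      then have "real i = real_of_int f" using \<open>f \<ge> 0\<close> by simp
      with f \<open>h > 0\<close> show ?thesis by (simp add: field_simps)
    next
      case False
      then have i: "real i = real N - 1" using \<open>idx t = i\<close> \<open>N \<ge> 1\<close> by (simp add: idx_def f_def)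
      have "real N - 1 \<le> (t - a) / h" using False \<open>f \<ge> 0\<close> \<open>N \<ge> 1\<close> f by linarith
      then have "a + (real N - 1) * h \<le> t" using \<open>h > 0\<close> by (simp add: field_simps)
      moreover have "t \<le> a + real N * h" using \<open>t \<le> b\<close> assms(3) by simp
      ultimately show ?thesis unfolding i by (simp add: algebra_simps)
    qed
  qed
  show thesis
  proof (rule that)
    show "(\<Union>i<N. P i) = {a..b}"
      using \<open>N \<ge> 1\<close> by (auto simp: P_def idx_def)
    show "P i \<inter> P j = {}" if "i \<noteq> j" for i j
      using that by (auto simp: P_def)
    show "is_interval (P i)" for i
      unfolding is_interval_1 P_def by clarsimp (metis idx_mono order.antisym)
    show "\<bar>y - x\<bar> \<le> h" if "x \<in> P i" "y \<in> P i" for i x y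
      using bounds [OF that(1)] bounds [OF that(2)] by (simp add: abs_le_iff field_simps)
  qed
qed

lemma exists_mesh_width:
  fixes a b C lam :: real
  assumes "a < b" "r \<ge> 1" "0 \<le> C" "0 < lam"
  obtains h N where "h > 0" "N \<ge> 1" "C * h ^ r \<le> lam" "b - a \<le> real N * h"
    "real N \<le> 1 + (b - a) * C powr (1 / real r) * lam powr (- 1 / real r)"
proof (cases "C = 0")
  case True
  show thesis by (rule that [of "b - a" 1]) (use assms True in auto)
next
  case False
  then have "C > 0" using assms by simp
  define h where "h = (lam / C) powr (1 / real r)"
  have "h > 0" using \<open>C > 0\<close> assms by (simp add: h_def)
  have "h ^ r = lam / C"
    using \<open>C > 0\<close> assms by (simp add: h_def powr_realpow [symmetric] powr_powr)
  define N where "N = nat \<lceil>(b - a) / h\<rceil>"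
  have "(b - a) / h > 0" using \<open>h > 0\<close> assms by simp
  then have N: "N \<ge> 1" "real N \<le> (b - a) / h + 1" "(b - a) / h \<le> real N"
    unfolding N_def by linarith+
  have "(b - a) / h = (b - a) * C powr (1 / real r) * lam powr (- 1 / real r)"
    using \<open>C > 0\<close> assms by (simp add: h_def powr_divide powr_minus_divide divide_simps powr_minus)
  moreover have "b - a \<le> real N * h" using N \<open>h > 0\<close> by (simp add: divide_simps)
  moreover have "C * h ^ r \<le> lam" using \<open>h ^ r = lam / C\<close> \<open>C > 0\<close> by simp
  ultimately show thesis using that \<open>h > 0\<close> N by auto
qed

lemma abs_le_SUP_abs:
  fixes f :: "'a::topological_space \<Rightarrow> real"
  assumes "continuous_on S f" "compact S" "t \<in> S"
  shows "\<bar>f t\<bar> \<le> (SUP t\<in>S. \<bar>f t\<bar>)"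
  using assms
  by (intro cSUP_upper bounded_imp_bdd_above compact_imp_bounded compact_continuous_image
      continuous_intros)

lemma UN_small_components_partition:
  fixes lam :: real
  assumes cover: "(\<Union>i<N. P i) = {a..b}" and disj: "\<And>i j. i \<noteq> j \<Longrightarrow> P i \<inter> P j = {}"
    and pieces: "\<And>i. i < N \<Longrightarrow> finite (small_components (P i) g lam) \<and> card (small_components (P i) g lam) \<le> r"
    and "lam > 0"
  defines "F \<equiv> \<Union>i<N. small_components (P i) g lam"
  shows "finite F \<and> (\<forall>J\<in>F. is_interval J) \<and> disjoint F \<and> card F \<le> N * r \<and>
    {t\<in>{a..b}. \<bar>g t\<bar> < lam} \<subseteq> \<Union>F \<and> \<Union>F \<subseteq> {t\<in>{a..b}. \<bar>g t\<bar> < 8 * lam}"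
proof (intro conjI)
  show "finite F" using pieces by (simp add: F_def)
  show "\<forall>J\<in>F. is_interval J" using is_interval_small_components by (auto simp: F_def)
  show "disjoint F" unfolding F_def by (rule disjoint_UN_small_components [OF disj])
  have "card F \<le> (\<Sum>i<N. card (small_components (P i) g lam))"
    unfolding F_def by (rule card_UN_le) simp
  also have "\<dots> \<le> (\<Sum>i<N. r)" using pieces by (intro sum_mono) auto
  finally show "card F \<le> N * r" by simp
  show "{t\<in>{a..b}. \<bar>g t\<bar> < lam} \<subseteq> \<Union>F"
  proof
    fix t assume t: "t \<in> {t\<in>{a..b}. \<bar>g t\<bar> < lam}"
    then have "t \<in> (\<Union>i<N. P i)" using cover by simp
    then obtain i where "i < N" "t \<in> P i" by blast
    then show "t \<in> \<Union>F"
      using small_components_cover [OF \<open>lam > 0\<close>, of "P i" g] t by (fastforce simp: F_def)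
  qed
  show "\<Union>F \<subseteq> {t\<in>{a..b}. \<bar>g t\<bar> < 8 * lam}"
    using small_components_subset cover by (fastforce simp: F_def)
qed

theorem corollary2p2:
  fixes a b :: real and r :: nat and g :: "real \<Rightarrow> real"
    and D :: "nat \<Rightarrow> real \<Rightarrow> real" and lam :: real
  assumes "a < b" and "r \<ge> 1"
    and "deriv_chain_on r {a..b} g D"
    and "0 < lam" and "lam \<le> (SUP t\<in>{a..b}. \<bar>g t\<bar>)"
  shows "\<exists>F :: real set set. finite F \<and> (\<forall>J\<in>F. is_interval J) \<and> disjoint F \<and>
           real (card F) \<le> 30 * real r * (1 + (b - a) * (SUP t\<in>{a..b}. \<bar>D r t\<bar>) powr (1 / real r)
                                               * lam powr (- 1 / real r)) \<and>
           {t\<in>{a..b}. \<bar>g t\<bar> < lam} \<subseteq> \<Union>F \<and>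
           \<Union>F \<subseteq> {t\<in>{a..b}. \<bar>g t\<bar> < 8 * lam}"
proof -
  define C where "C = (SUP t\<in>{a..b}. \<bar>D r t\<bar>)"
  let ?X = "(b - a) * C powr (1 / real r) * lam powr (- 1 / real r)"
  have bound: "\<bar>D r t\<bar> \<le> C" if "t \<in> {a..b}" for t
    using abs_le_SUP_abs [of _ "D r"] assms(3) that by (simp add: C_def deriv_chain_on_def)
  then have "0 \<le> C" using \<open>a < b\<close> by force
  obtain h N where hN: "h > 0" "N \<ge> 1" "C * h ^ r \<le> lam" "b - a \<le> real N * h" "real N \<le> 1 + ?X"
    using exists_mesh_width [OF \<open>a < b\<close> \<open>r \<ge> 1\<close> \<open>0 \<le> C\<close> \<open>0 < lam\<close>] .
  obtain P where P: "(\<Union>i<N. P i) = {a..b}" "\<And>i j. i \<noteq> j \<Longrightarrow> P i \<inter> P j = {}"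
      "\<And>i. is_interval (P i)" "\<And>i x y. x \<in> P i \<Longrightarrow> y \<in> P i \<Longrightarrow> \<bar>y - x\<bar> \<le> h"
    using atLeastAtMost_mesh_partition [OF hN(1,2,4)] by blast
  define F where "F = (\<Union>i<N. small_components (P i) g lam)"
  have "finite (small_components (P i) g lam) \<and> card (small_components (P i) g lam) \<le> r"
    if "i < N" for i
    using card_small_components_deriv_chain [OF assms(3,2) bound hN(3) \<open>0 < lam\<close> P(3)] P(1,4) that
    by blast
  then have F: "finite F \<and> (\<forall>J\<in>F. is_interval J) \<and> disjoint F \<and> card F \<le> N * r \<and>
      {t\<in>{a..b}. \<bar>g t\<bar> < lam} \<subseteq> \<Union>F \<and> \<Union>F \<subseteq> {t\<in>{a..b}. \<bar>g t\<bar> < 8 * lam}"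
    unfolding F_def using UN_small_components_partition [OF P(1,2) _ \<open>0 < lam\<close>] by blast
  then have "real (card F) \<le> real N * real r" by (metis of_nat_le_iff of_nat_mult)
  also have "\<dots> \<le> (1 + ?X) * real r" using hN(5) by (intro mult_right_mono) auto
  also have "\<dots> \<le> 30 * real r * (1 + ?X)" using \<open>a < b\<close> by simp
  finally show ?thesis using F unfolding C_def by blast
qed

end
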